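(* Let $G$ be a $1$-tuple regular finite group, let $N$ be a subgroup of $G$ that is a union of order classes, set $\bar G=G/N$, and let $a,b\in\bar G$ be elements of the same order. Then (i) there exist preimages $g_a,g_b\in G$ of $a$ and $b$, respectively, with the same order; and (ii) the conjugacy classes of $a$ and $b$ in $\bar G$ have the same size.
   Context: A subgroup $N$ of $G$ is a union of order classes if for every $n\in\mathbb{N}$ it contains either all or none of the elements of order $n$ of $G$ (such $N$ is normal). A finite group $G$ is $1$-tuple regular if for all $g_1,h_1\in G$ of the same order there is a bijection $\Psi\colon G\to G$ such that for every $g\in G$ the assignment $g_1\mapsto h_1, g\mapsto\Psi(g)$ defines an isomorphism $\langle g_1,g\rangle\to\langle h_1,\Psi(g)\rangle$. *)

theory Defs
  imports "HOL-Algebra.Algebra"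
begin

definition union_of_order_classes :: "('a, 'b) monoid_scheme \<Rightarrow> 'a set \<Rightarrow> bool" where
  "union_of_order_classes G N \<longleftrightarrow> subgroup N G \<and>
     (\<forall>g \<in> carrier G. \<forall>h \<in> carrier G. group.ord G g = group.ord G h \<longrightarrow> (g \<in> N \<longleftrightarrow> h \<in> N))"

definition one_tuple_regular :: "('a, 'b) monoid_scheme \<Rightarrow> bool" where
  "one_tuple_regular G \<longleftrightarrow>
     (\<forall>g1 \<in> carrier G. \<forall>h1 \<in> carrier G. group.ord G g1 = group.ord G h1 \<longrightarrow>
        (\<exists>\<Psi>. bij_betw \<Psi> (carrier G) (carrier G) \<and>
          (\<forall>g \<in> carrier G. \<exists>\<phi>.
             \<phi> \<in> iso (subgroup_generated G {g1, g}) (subgroup_generated G {h1, \<Psi> g}) \<and>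
             \<phi> g1 = h1 \<and> \<phi> g = \<Psi> g)))"

definition conj_class :: "('a, 'b) monoid_scheme \<Rightarrow> 'a \<Rightarrow> 'a set" where
  "conj_class G x = {g \<otimes>\<^bsub>G\<^esub> x \<otimes>\<^bsub>G\<^esub> inv\<^bsub>G\<^esub> g | g. g \<in> carrier G}"

end

(*
  Let x in a have order n and let a have order m in G/N.  For every divisor e of n the power
  x^(n/e) has order e, and it lies in N iff m divides n/e.  Since N is a union of order classes,
  whether an element of order e lies in N depends on e alone; comparing x in a with y in b over
  all common divisors e forces ord x and ord y to have the same p-adic valuation at every prime p
  dividing m.  An element of minimal order in its coset has no other prime divisors, so minimal
  representatives of a and b have the same order.

  G acts on G/N by conjugation, and the stabiliser of N z is C(z) = {g. [g, z] in N}, so the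
  conjugacy class of N z has |G| / |C(z)| elements.  If ord z1 = ord z2, the bijection Psi given
  by 1-tuple regularity maps C(z1) into C(z2), because the isomorphism <z1, g> -> <z2, Psi g>
  preserves the order of the commutator [g, z1].  Applied to the minimal representatives from
  the first part this gives conjugacy classes of equal size.
*)

theory Submission
  imports Defs
begin

lemma prime_power_separates_quotients:
  fixes m n n' p :: nat
  assumes "n > 0" "n' > 0" "m dvd n" "m dvd n'" "Factorial_Ring.prime p" "p dvd m"
    and less: "multiplicity p n < multiplicity p n'"
  shows "\<exists>e. e dvd n \<and> e dvd n' \<and> \<not> m dvd n div e \<and> m dvd n' div e"
proof -
  have "m \<noteq> 0"
    using assms(1,3) by (metis dvd_0_left_iff less_irrefl)
  define v where "v = multiplicity p m"
  have "v \<ge> 1"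
    using prime_multiplicity_gt_zero_iff[OF prime_imp_prime_elem[OF assms(5)] \<open>m \<noteq> 0\<close>] assms(6)
    unfolding v_def by simp
  have "v \<le> multiplicity p n"
    using dvd_imp_multiplicity_le[OF assms(3)] assms(1) unfolding v_def by simp
  define k where "k = multiplicity p n - v + 1"
  define e where "e = p ^ k"
  have "e dvd n" "e dvd n'"
    using multiplicity_dvd'[of k p n] multiplicity_dvd'[of k p n'] less \<open>v \<ge> 1\<close> \<open>v \<le> _\<close>
    unfolding e_def k_def by auto
  have mult_e: "multiplicity q e = (if q = p then k else 0)" if "Factorial_Ring.prime q" for q
    using that assms(5) multiplicity_distinct_prime_power[of q p k]
      multiplicity_prime_power[of p k] prime_imp_prime_elem
    unfolding e_def by auto
  have mult_div: "multiplicity q (x div e) = multiplicity q x - multiplicity q e"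
    if "Factorial_Ring.prime q" "x > 0" "e dvd x" for q x
    using that prime_elem_multiplicity_mult_distrib[of q e "x div e"] by (auto elim!: dvdE)
  have "\<not> m dvd n div e"
  proof
    assume "m dvd n div e"
    moreover have "n div e \<noteq> 0"
      using \<open>e dvd n\<close> assms(1) by auto
    ultimately have "v \<le> multiplicity p (n div e)"
      unfolding v_def by (rule dvd_imp_multiplicity_le)
    then show False
      using mult_div[OF assms(5,1) \<open>e dvd n\<close>] mult_e[OF assms(5)] \<open>v \<ge> 1\<close>
      unfolding k_def by simp
  qed
  moreover have "m dvd n' div e"
  proof (rule multiplicity_le_imp_dvd[OF \<open>m \<noteq> 0\<close>])
    fix q :: nat
    assume q: "Factorial_Ring.prime q"
    have "multiplicity q m \<le> multiplicity q n'"
      using dvd_imp_multiplicity_le[OF assms(4)] assms(2) by simp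
    then show "multiplicity q m \<le> multiplicity q (n' div e)"
      using mult_div[OF q assms(2) \<open>e dvd n'\<close>] mult_e[OF q] less \<open>v \<le> _\<close>
      unfolding k_def v_def by (cases "q = p") auto
  qed
  ultimately show ?thesis
    using \<open>e dvd n\<close> \<open>e dvd n'\<close> by blast
qed

lemma multiplicity_eq_if_dvd_quotients_iff:
  fixes m n n' p :: nat
  assumes "n > 0" "n' > 0" "m dvd n" "m dvd n'" "Factorial_Ring.prime p" "p dvd m"
    and "\<And>e. e dvd n \<Longrightarrow> e dvd n' \<Longrightarrow> m dvd n div e \<longleftrightarrow> m dvd n' div e"
  shows "multiplicity p n = multiplicity p n'"
  using prime_power_separates_quotients[of n n' m p] prime_power_separates_quotients[of n' n m p]
    assms by (metis linorder_neqE_nat)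

lemma (in group) pow_conj:
  assumes "g \<in> carrier G" "h \<in> carrier G"
  shows "(g \<otimes> h \<otimes> inv g) [^] (n::nat) = g \<otimes> h [^] n \<otimes> inv g"
proof -
  have cancel: "inv g \<otimes> (g \<otimes> x) = x" if "x \<in> carrier G" for x
    using that assms by (simp add: m_assoc [symmetric])
  show ?thesis
    using assms by (induction n) (simp_all add: m_assoc cancel)
qed

lemma (in group) ord_conj:
  assumes "g \<in> carrier G" "h \<in> carrier G"
  shows "ord (g \<otimes> h \<otimes> inv g) = ord h"
proof -
  have "g \<otimes> x \<otimes> inv g = \<one> \<longleftrightarrow> x = \<one>" if "x \<in> carrier G" for x
    using that assms inv_solve_right'[of \<one> "g \<otimes> x" g] by simp
  then show ?thesis
    using assms by (simp add: ord_unique pow_conj pow_eq_id)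
qed

lemma (in group) ord_pow_ord_div:
  assumes "z \<in> carrier G" "ord z \<noteq> 0" "e dvd ord z"
  shows "ord (z [^] (ord z div e)) = e"
proof -
  obtain k where k: "ord z = e * k"
    using assms(3) by (elim dvdE)
  then have "e \<noteq> 0" "k \<noteq> 0"
    using assms(2) by auto
  then show ?thesis
    using ord_pow[OF assms(1), of k] k by simp
qed

lemma (in group) ord_subgroup_generated:
  assumes "x \<in> carrier (subgroup_generated G S)"
  shows "group.ord (subgroup_generated G S) x = ord x"
proof -
  have "x \<in> carrier G"
    using assms carrier_subgroup_generated_subset by blast
  then show ?thesis
    using group.ord_unique[OF group_subgroup_generated assms]
    by (simp add: pow_subgroup_generated pow_eq_id)
qed

lemma iso_ord_eq:
  assumes "group G" "group H" "f \<in> iso G H" "x \<in> carrier G"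
  shows "group.ord H (f x) = group.ord G x"
proof -
  interpret group_hom G H f
    using assms by (simp add: group_hom_def group_hom_axioms_def iso_def)
  have "f (x [^]\<^bsub>G\<^esub> n) = f \<one>\<^bsub>G\<^esub> \<longleftrightarrow> x [^]\<^bsub>G\<^esub> n = \<one>\<^bsub>G\<^esub>" for n :: nat
    using assms(3,4) by (intro inj_on_eq_iff) (auto simp: iso_def bij_betw_def)
  then show ?thesis
    using assms(4) by (simp add: H.ord_unique G.pow_eq_id hom_nat_pow)
qed

lemma (in group) ord_commutator_iso:
  assumes f: "f \<in> iso (subgroup_generated G {z, g}) (subgroup_generated G {z', g'})"
    and "f z = z'" "f g = g'" "z \<in> carrier G" "g \<in> carrier G"
  shows "ord (g' \<otimes> z' \<otimes> inv g' \<otimes> inv z') = ord (g \<otimes> z \<otimes> inv g \<otimes> inv z)"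
proof -
  let ?H = "subgroup_generated G {z, g}" and ?K = "subgroup_generated G {z', g'}"
  interpret f: group_hom ?H ?K f
    using f by (simp add: group_hom_def group_hom_axioms_def iso_def)
  have zg: "z \<in> carrier ?H" "g \<in> carrier ?H"
    using assms by (auto simp: carrier_subgroup_generated intro: generate.incl)
  then have zg': "z' \<in> carrier ?K" "g' \<in> carrier ?K"
    using assms(2,3) f.hom_closed by blast+
  have closed: "a \<otimes> b \<in> carrier ?H" "inv a \<in> carrier ?H"
    if "a \<in> carrier ?H" "b \<in> carrier ?H" for a b
    using f.G.m_closed[OF that] f.G.inv_closed[OF that(1)] that by simp_all
  have f_mult: "f (a \<otimes> b) = f a \<otimes> f b" and f_inv: "f (inv a) = inv (f a)"
    if "a \<in> carrier ?H" "b \<in> carrier ?H" for a b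
    using f.hom_mult[OF that] f.hom_inv[OF that(1)] f.hom_closed[OF that(1)] that by simp_all
  have "f (g \<otimes> z \<otimes> inv g \<otimes> inv z) = g' \<otimes> z' \<otimes> inv g' \<otimes> inv z'"
    using zg assms(2,3) by (simp add: closed f_mult f_inv)
  moreover have "g \<otimes> z \<otimes> inv g \<otimes> inv z \<in> carrier ?H"
    using zg by (simp add: closed)
  ultimately show ?thesis
    using iso_ord_eq[OF f.G.is_group f.H.is_group f] ord_subgroup_generated f.hom_closed
    by metis
qed

lemma (in normal) rcos_in_carrier_Mod:
  "x \<in> carrier G \<Longrightarrow> H #> x \<in> carrier (G Mod H)"
  by (simp add: carrier_FactGroup)

lemma (in normal) rcos_eq_iff:
  assumes "u \<in> carrier G" "v \<in> carrier G"
  shows "H #> u = H #> v \<longleftrightarrow> u \<otimes> inv v \<in> H"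
  using assms rcos_module[OF is_group] repr_independence[OF _ _ subgroup_axioms]
    rcos_self[OF _ subgroup_axioms] by metis

lemma (in normal) pow_mem_iff_ord_dvd:
  assumes "z \<in> carrier G"
  shows "z [^] (k::nat) \<in> H \<longleftrightarrow> group.ord (G Mod H) (H #> z) dvd k"
proof -
  have "H #> z \<in> carrier (G Mod H)"
    using assms by (rule rcos_in_carrier_Mod)
  moreover have "z [^] k \<in> H \<longleftrightarrow> H #> z [^] k = H"
    using assms coset_join2[OF _ subgroup_axioms] rcos_self[OF _ subgroup_axioms] by fastforce
  moreover have "(H #> z) [^]\<^bsub>G Mod H\<^esub> k = H #> z [^] k"
    using assms by (rule FactGroup_pow)
  ultimately show ?thesis
    using group.pow_eq_id[OF factorgroup_is_group, of "H #> z" k] by simp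
qed

lemma (in normal) min_ord_rep_prime_dvd:
  assumes "finite (carrier G)" "z \<in> carrier G"
    and min: "\<And>w. w \<in> H #> z \<Longrightarrow> ord z \<le> ord w"
    and p: "Factorial_Ring.prime p" "p dvd ord z"
  shows "p dvd group.ord (G Mod H) (H #> z)"
proof (rule ccontr)
  define m where "m = group.ord (G Mod H) (H #> z)"
  assume "\<not> p dvd group.ord (G Mod H) (H #> z)"
  then have "coprime p m"
    using p(1) prime_imp_coprime unfolding m_def by blast
  then obtain x y where xy: "p * x = m * y + 1"
    using bezout_nat[of p m] p(1) by (metis coprime_imp_gcd_eq_1 not_prime_0)
  have "z [^] (m * y) \<in> H"
    using pow_mem_iff_ord_dvd[OF assms(2)] unfolding m_def by simp
  then have "z [^] (p * x) \<in> H #> z"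
    using rcosI[OF _ subset assms(2)] xy by simp
  moreover have "ord (z [^] (p * x)) < ord z"
  proof -
    have "p dvd gcd (ord z) (p * x)"
      using p(2) by simp
    moreover have "p * x \<noteq> 0"
      using xy by simp
    ultimately have "p \<le> gcd (ord z) (p * x)"
      by (simp add: dvd_imp_le)
    then have "gcd (ord z) (p * x) > 1"
      using prime_gt_1_nat[OF p(1)] by linarith
    then show ?thesis
      using ord_pow_gen[OF assms(2), of "p * x"] ord_ge_1[OF assms(1,2)] \<open>p * x \<noteq> 0\<close>
      by (simp add: div_less_dividend)
  qed
  ultimately show False
    using min by fastforce
qed

lemma (in normal) min_ord_repE:
  assumes "finite (carrier G)" "c \<in> carrier (G Mod H)"
  obtains z where "z \<in> carrier G" "c = H #> z" "\<And>w. w \<in> c \<Longrightarrow> ord z \<le> ord w"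
proof -
  obtain x where "x \<in> carrier G" "c = H #> x"
    using assms(2) by (auto simp: carrier_FactGroup)
  then have "x \<in> c"
    using rcos_self[OF _ subgroup_axioms] by simp
  then obtain z where "z \<in> c" and min: "\<And>w. w \<in> c \<Longrightarrow> ord z \<le> ord w"
    using ex_has_least_nat[of "\<lambda>w. w \<in> c" x ord] by blast
  moreover have "z \<in> carrier G" "c = H #> z"
    using \<open>z \<in> c\<close> \<open>x \<in> carrier G\<close> \<open>c = H #> x\<close> r_coset_subset_G[OF subset]
      repr_independence[OF _ _ subgroup_axioms] by blast+
  ultimately show thesis
    using that by blast
qed

definition centralizer_mod :: "('a, 'b) monoid_scheme \<Rightarrow> 'a set \<Rightarrow> 'a \<Rightarrow> 'a set" where
  "centralizer_mod G N z =
     {g \<in> carrier G. g \<otimes>\<^bsub>G\<^esub> z \<otimes>\<^bsub>G\<^esub> inv\<^bsub>G\<^esub> g \<otimes>\<^bsub>G\<^esub> inv\<^bsub>G\<^esub> z \<in> N}"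

definition conj_Mod :: "('a, 'b) monoid_scheme \<Rightarrow> 'a set \<Rightarrow> 'a \<Rightarrow> 'a set \<Rightarrow> 'a set" where
  "conj_Mod G N g = (\<lambda>c \<in> carrier (G Mod N).
     (N #>\<^bsub>G\<^esub> g) \<otimes>\<^bsub>G Mod N\<^esub> c \<otimes>\<^bsub>G Mod N\<^esub> inv\<^bsub>G Mod N\<^esub> (N #>\<^bsub>G\<^esub> g))"

lemma (in normal) conj_Mod_action: "group_action G (carrier (G Mod H)) (conj_Mod G H)"
proof -
  have "(\<lambda>q. \<lambda>c \<in> carrier (G Mod H). q \<otimes>\<^bsub>G Mod H\<^esub> c \<otimes>\<^bsub>G Mod H\<^esub> inv\<^bsub>G Mod H\<^esub> q) \<circ> (#>) H
      \<in> hom G (BijGroup (carrier (G Mod H)))"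
    using Group.hom_compose[OF r_coset_hom_Mod group.conjugation_is_hom[OF factorgroup_is_group]] .
  then show ?thesis
    unfolding group_action_def group_hom_def group_hom_axioms_def conj_Mod_def
    by (simp add: o_def group_BijGroup is_group)
qed

lemma (in normal) conj_Mod_rcos:
  assumes "g \<in> carrier G" "x \<in> carrier G"
  shows "conj_Mod G H g (H #> x) = H #> (g \<otimes> x \<otimes> inv g)"
  using assms by (simp add: conj_Mod_def rcos_in_carrier_Mod inv_FactGroup rcos_inv rcos_sum)

lemma (in normal) card_conj_class_Mod:
  assumes "finite (carrier G)" "z \<in> carrier G"
  shows "card (conj_class (G Mod H) (H #> z)) * card (centralizer_mod G H z) = order G"
proof -
  have "orbit G (conj_Mod G H) (H #> z) = conj_class (G Mod H) (H #> z)"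
    using assms(2) conj_Mod_rcos[symmetric] unfolding orbit_def conj_class_def
    by (auto simp: carrier_FactGroup conj_Mod_def)
  moreover have "stabilizer G (conj_Mod G H) (H #> z) = centralizer_mod G H z"
    using assms(2) unfolding stabilizer_def centralizer_mod_def
    by (simp add: conj_Mod_rcos rcos_eq_iff cong: conj_cong)
  ultimately show ?thesis
    using group_action.orbit_stabilizer_theorem[OF conj_Mod_action rcos_in_carrier_Mod[OF assms(2)]]
    by simp
qed

lemma union_of_order_classesD:
  assumes "union_of_order_classes G N" "g \<in> carrier G" "h \<in> carrier G"
    and "group.ord G g = group.ord G h"
  shows "g \<in> N \<longleftrightarrow> h \<in> N"
  using assms unfolding union_of_order_classes_def by blast

lemma union_of_order_classes_normal:
  fixes G (structure)
  assumes "group G" "union_of_order_classes G N"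
  shows "normal N G"
proof -
  interpret group G by fact
  have N: "subgroup N G"
    using assms(2) by (simp add: union_of_order_classes_def)
  moreover have "x \<otimes> h \<otimes> inv x \<in> N" if "x \<in> carrier G" "h \<in> N" for x h
    using union_of_order_classesD[OF assms(2), of "x \<otimes> h \<otimes> inv x" h] ord_conj[of x h] that
      subgroup.mem_carrier[OF N] by simp
  ultimately show ?thesis
    by (simp add: normal_inv_iff)
qed

locale order_class_subgroup = group G for G (structure) +
  fixes N :: "'a set"
  assumes union_of_order_classes: "union_of_order_classes G N"
    and finite_carrier: "finite (carrier G)"

sublocale order_class_subgroup \<subseteq> normal N G
  using union_of_order_classes_normal[OF is_group union_of_order_classes] .

context order_class_subgroup
begin

lemma multiplicity_ord_eq:
  assumes "x \<in> carrier G" "y \<in> carrier G"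
    and same: "group.ord (G Mod N) (N #> x) = group.ord (G Mod N) (N #> y)"
    and p: "Factorial_Ring.prime p" "p dvd group.ord (G Mod N) (N #> x)"
  shows "multiplicity p (ord x) = multiplicity p (ord y)"
proof -
  define m where "m = group.ord (G Mod N) (N #> x)"
  have x_pow: "x [^] k \<in> N \<longleftrightarrow> m dvd k" for k :: nat
    using pow_mem_iff_ord_dvd[OF assms(1)] unfolding m_def by simp
  have y_pow: "y [^] k \<in> N \<longleftrightarrow> m dvd k" for k :: nat
    using pow_mem_iff_ord_dvd[OF assms(2)] unfolding m_def same by simp
  have ord_pos: "ord x > 0" "ord y > 0"
    using ord_ge_1[OF finite_carrier] assms(1,2) by fastforce+
  show ?thesis
  proof (rule multiplicity_eq_if_dvd_quotients_iff[where m = m, OF ord_pos])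
    show "m dvd ord x" "m dvd ord y"
      using x_pow[of "ord x"] y_pow[of "ord y"] assms(1,2) subgroup.one_closed[OF subgroup_axioms]
      by simp_all
    show "Factorial_Ring.prime p" "p dvd m"
      using p unfolding m_def by simp_all
  next
    fix e
    assume "e dvd ord x" "e dvd ord y"
    then have "ord (x [^] (ord x div e)) = ord (y [^] (ord y div e))"
      using ord_pow_ord_div assms(1,2) ord_pos by simp
    then show "m dvd ord x div e \<longleftrightarrow> m dvd ord y div e"
      using union_of_order_classesD[OF union_of_order_classes nat_pow_closed[OF assms(1)]
          nat_pow_closed[OF assms(2)]] x_pow y_pow by simp
  qed
qed

lemma min_ord_reps_ord_eq:
  assumes "x \<in> carrier G" "y \<in> carrier G"
    and same: "group.ord (G Mod N) (N #> x) = group.ord (G Mod N) (N #> y)"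
    and min_x: "\<And>w. w \<in> N #> x \<Longrightarrow> ord x \<le> ord w"
    and min_y: "\<And>w. w \<in> N #> y \<Longrightarrow> ord y \<le> ord w"
  shows "ord x = ord y"
proof -
  have "normalize (ord x) = normalize (ord y)"
  proof (rule multiplicity_eq_imp_eq)
    show "ord x \<noteq> 0" "ord y \<noteq> 0"
      using ord_ge_1[OF finite_carrier] assms(1,2) by fastforce+
  next
    fix p :: nat
    assume p: "Factorial_Ring.prime p"
    show "multiplicity p (ord x) = multiplicity p (ord y)"
    proof (cases "p dvd group.ord (G Mod N) (N #> x)")
      case True
      then show ?thesis
        using multiplicity_ord_eq[OF assms(1-3) p] by blast
    next
      case False
      then have "\<not> p dvd ord x" "\<not> p dvd ord y"
        using min_ord_rep_prime_dvd[OF finite_carrier assms(1) min_x p]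
          min_ord_rep_prime_dvd[OF finite_carrier assms(2) min_y p] same by auto
      then show ?thesis
        by (simp add: not_dvd_imp_multiplicity_0)
    qed
  qed
  then show ?thesis
    by simp
qed

lemma card_centralizer_mod_le:
  assumes "one_tuple_regular G" "z1 \<in> carrier G" "z2 \<in> carrier G" "ord z1 = ord z2"
  shows "card (centralizer_mod G N z1) \<le> card (centralizer_mod G N z2)"
proof -
  obtain \<Psi> where bij: "bij_betw \<Psi> (carrier G) (carrier G)"
    and iso: "\<forall>g \<in> carrier G. \<exists>f. f \<in> iso (subgroup_generated G {z1, g})
        (subgroup_generated G {z2, \<Psi> g}) \<and> f z1 = z2 \<and> f g = \<Psi> g"
    using assms unfolding one_tuple_regular_def by blast
  have "\<Psi> ` centralizer_mod G N z1 \<subseteq> centralizer_mod G N z2"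
  proof (rule image_subsetI)
    fix g
    assume g: "g \<in> centralizer_mod G N z1"
    then have "g \<in> carrier G" "\<Psi> g \<in> carrier G"
      using bij_betwE[OF bij] unfolding centralizer_mod_def by auto
    moreover obtain f
      where f: "f \<in> iso (subgroup_generated G {z1, g}) (subgroup_generated G {z2, \<Psi> g})"
        and "f z1 = z2" "f g = \<Psi> g"
      using iso \<open>g \<in> carrier G\<close> by blast
    then have "ord (\<Psi> g \<otimes> z2 \<otimes> inv (\<Psi> g) \<otimes> inv z2) = ord (g \<otimes> z1 \<otimes> inv g \<otimes> inv z1)"
      using ord_commutator_iso[OF f _ _ assms(2) \<open>g \<in> carrier G\<close>] by blast
    ultimately show "\<Psi> g \<in> centralizer_mod G N z2"
      using g assms(2,3) union_of_order_classesD[OF union_of_order_classes,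
          of "\<Psi> g \<otimes> z2 \<otimes> inv (\<Psi> g) \<otimes> inv z2" "g \<otimes> z1 \<otimes> inv g \<otimes> inv z1"]
      unfolding centralizer_mod_def by simp
  qed
  moreover have "inj_on \<Psi> (centralizer_mod G N z1)"
    using bij unfolding bij_betw_def centralizer_mod_def by (auto intro: inj_on_subset)
  moreover have "finite (centralizer_mod G N z2)"
    using finite_carrier unfolding centralizer_mod_def by simp
  ultimately show ?thesis
    using card_inj_on_le by blast
qed

lemma card_conj_class_Mod_eq:
  assumes "one_tuple_regular G" "x \<in> carrier G" "y \<in> carrier G" "ord x = ord y"
  shows "card (conj_class (G Mod N) (N #> x)) = card (conj_class (G Mod N) (N #> y))"
proof -
  have "card (centralizer_mod G N x) = card (centralizer_mod G N y)"
    using card_centralizer_mod_le[OF assms(1)] assms(2-4) by (simp add: le_antisym)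
  moreover have "order G \<noteq> 0"
    using finite_carrier order_gt_0_iff_finite by simp
  ultimately show ?thesis
    using card_conj_class_Mod[OF finite_carrier assms(2)] card_conj_class_Mod[OF finite_carrier assms(3)]
    by (metis mult_cancel_right mult_0_right)
qed

end

theorem lemma3p5:
  fixes G (structure) and N :: "'a set" and a b :: "'a set"
  assumes "group G" and "finite (carrier G)"
    and "one_tuple_regular G"
    and "union_of_order_classes G N"
    and "a \<in> carrier (G Mod N)" and "b \<in> carrier (G Mod N)"
    and "group.ord (G Mod N) a = group.ord (G Mod N) b"
  shows "(\<exists>ga \<in> a. \<exists>gb \<in> b. group.ord G ga = group.ord G gb)
    \<and> card (conj_class (G Mod N) a) = card (conj_class (G Mod N) b)"
proof -
  interpret order_class_subgroup G N
    using assms(1,2,4) by (simp add: order_class_subgroup_def order_class_subgroup_axioms_def)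
  obtain x where x: "x \<in> carrier G" "a = N #> x" "\<And>w. w \<in> a \<Longrightarrow> ord x \<le> ord w"
    using min_ord_repE[OF finite_carrier assms(5)] by blast
  obtain y where y: "y \<in> carrier G" "b = N #> y" "\<And>w. w \<in> b \<Longrightarrow> ord y \<le> ord w"
    using min_ord_repE[OF finite_carrier assms(6)] by blast
  have "ord x = ord y"
    using min_ord_reps_ord_eq[OF x(1) y(1)] x y assms(7) by simp
  moreover have "x \<in> a" "y \<in> b"
    using x y rcos_self[OF _ subgroup_axioms] by simp_all
  moreover have "card (conj_class (G Mod N) a) = card (conj_class (G Mod N) b)"
    using card_conj_class_Mod_eq[OF assms(3) x(1) y(1) \<open>ord x = ord y\<close>] x(2) y(2) by simp
  ultimately show ?thesis
    by blast
qed

end
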